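(* Every homothetic packing of $n\ge 3$ squares has at most $4n-8$ contacts.
   Context: Let $S=\{(x,y): -1\le x,y\le 1\}$. A homothetic packing of $n$ squares is a set $P=\{S_1,\ldots,S_n\}$ with $S_i=r_iS+p_i$, $r_i>0$, $p_i\in\mathbb{R}^2$, such that distinct squares have disjoint interiors. A contact is an unordered pair $\{i,j\}$, $i\ne j$, with $S_i\cap S_j\neq\emptyset$. *)

theory Defs
  imports "HOL-Analysis.Analysis"
begin

definition unit_square :: "(real \<times> real) set" where
  "unit_square = {(x, y). -1 \<le> x \<and> x \<le> 1 \<and> -1 \<le> y \<and> y \<le> 1}"

definition hsquare :: "real \<Rightarrow> real \<times> real \<Rightarrow> (real \<times> real) set" where
  "hsquare r p = (\<lambda>z. r *\<^sub>R z + p) ` unit_square"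

definition homothetic_packing :: "nat \<Rightarrow> (nat \<Rightarrow> real) \<Rightarrow> (nat \<Rightarrow> real \<times> real) \<Rightarrow> bool" where
  "homothetic_packing n r p \<longleftrightarrow>
     (\<forall>i<n. r i > 0) \<and>
     (\<forall>i<n. \<forall>j<n. i \<noteq> j \<longrightarrow>
        interior (hsquare (r i) (p i)) \<inter> interior (hsquare (r j) (p j)) = {})"

definition contacts :: "nat \<Rightarrow> (nat \<Rightarrow> real) \<Rightarrow> (nat \<Rightarrow> real \<times> real) \<Rightarrow> nat set set" where
  "contacts n r p = {{i, j} | i j. i < n \<and> j < n \<and> i \<noteq> j \<and>
      hsquare (r i) (p i) \<inter> hsquare (r j) (p j) \<noteq> {}}"

end

theory Submission
  imports Defs
begin

text \<open>
Write square i as the box [x0 i, x1 i] \<times> [y0 i, y1 i]. Up to a quarter turn of the whole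
packing, every contact is a left contact: the right side of one box lies on the left side of
another. So it suffices to show that there are at most 2n - 4 left contacts. Charge a left contact
between i (on the left) and j to the right side of i if the top of i is lower than the top of j,
and to the left side of j otherwise; as interiors are disjoint, no vertical side is charged twice.
On every vertical line the side with the highest top, right sides winning ties, is never charged,
and neither is any side on the leftmost or the rightmost line. A short case analysis, using
n \<ge> 3, then finds four uncharged sides among the 2n vertical sides.
\<close>

lemma length_le_card_if_distinct:
  assumes "finite A" and "set xs \<subseteq> A" and "distinct xs"
  shows "length xs \<le> card A"
  using assms card_mono distinct_card by metis

lemma ex_in_fiber_notin_dominated:
  assumes "finite E" and "x \<in> E" and "asymp_on E R" and "transp_on E R"
    and dominated: "\<And>e. e \<in> U \<Longrightarrow> \<exists>e'\<in>E. v e' = v e \<and> R e e'"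
  shows "\<exists>e\<in>E - U. v e = v x"
proof -
  obtain e where e: "e \<in> E" "v e = v x" and "\<forall>e'\<in>E. R e e' \<longrightarrow> v e' \<noteq> v x"
    using Finite_Set.bex_max_element_with_property[OF assms(1,3,4), of "\<lambda>e. v e = v x"]
      assms(2) by blast
  then have "e \<notin> U" using dominated by fastforce
  with e show ?thesis by blast
qed

definition end_value :: "(nat \<Rightarrow> real) \<Rightarrow> (nat \<Rightarrow> real) \<Rightarrow> nat \<times> bool \<Rightarrow> real" where
  "end_value lo hi e = (if snd e then hi (fst e) else lo (fst e))"

text \<open>
In the application the intervals are the projections of the boxes to the x-axis, the ends are the
vertical sides, and the key of a side is the top coordinate of its box.
\<close>

locale charged_interval_ends =
  fixes n :: nat and lo hi key :: "nat \<Rightarrow> real" and U :: "(nat \<times> bool) set"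
  assumes lo_less_hi: "k < n \<Longrightarrow> lo k < hi k"
    and charged_subset: "U \<subseteq> {..<n} \<times> UNIV"
    and lower_charged: "(k, False) \<in> U \<Longrightarrow> \<exists>i<n. hi i = lo k \<and> key k \<le> key i"
    and upper_charged: "(k, True) \<in> U \<Longrightarrow> \<exists>j<n. lo j = hi k \<and> key k < key j"
begin

abbreviation ends :: "(nat \<times> bool) set" where
  "ends \<equiv> {..<n} \<times> UNIV"

lemma ex_free_end_at_value:
  assumes "e \<in> ends"
  shows "\<exists>f\<in>ends - U. end_value lo hi f = end_value lo hi e"
proof (rule ex_in_fiber_notin_dominated[OF _ assms])
  define R where "R e e' \<longleftrightarrow> key (fst e) < key (fst e') \<or>
    key (fst e) = key (fst e') \<and> \<not> snd e \<and> snd e'" for e e' :: "nat \<times> bool"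
  show "asymp_on ends R"
    unfolding R_def asymp_on_def by auto
  show "transp_on ends R"
    unfolding R_def transp_on_def by (smt (verit))
  show "\<exists>e'\<in>ends. end_value lo hi e' = end_value lo hi f \<and> R f e'" if charged: "f \<in> U" for f
  proof -
    obtain k b where f: "f = (k, b)" by force
    show ?thesis
    proof (cases b)
      case True
      then obtain j where "j < n" "lo j = hi k" "key k < key j"
        using upper_charged[of k] charged f by auto
      then show ?thesis using True f by (intro bexI[of _ "(j, False)"]) (auto simp: R_def end_value_def)
    next
      case False
      then obtain i where "i < n" "hi i = lo k" "key k \<le> key i"
        using lower_charged[of k] charged f by auto
      then show ?thesis using False f by (intro bexI[of _ "(i, True)"]) (auto simp: R_def end_value_def)
    qed
  qed
qed simp

definition xmin :: real where
  "xmin = Min (lo ` {..<n})"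

definition xmax :: real where
  "xmax = Max (hi ` {..<n})"

lemma xmin_le_lo: "k < n \<Longrightarrow> xmin \<le> lo k"
  unfolding xmin_def by simp

lemma hi_le_xmax: "k < n \<Longrightarrow> hi k \<le> xmax"
  unfolding xmax_def by simp

lemma ex_lo_eq_xmin_hi_eq_xmax:
  assumes "0 < n"
  obtains L R where "L < n" "lo L = xmin" "R < n" "hi R = xmax"
proof -
  have "xmin \<in> lo ` {..<n}" "xmax \<in> hi ` {..<n}"
    using assms unfolding xmin_def xmax_def by (auto intro!: Min_in Max_in)
  then show ?thesis using that by auto
qed

lemma lower_end_at_xmin_free:
  assumes "k < n" and "lo k = xmin"
  shows "(k, False) \<in> ends - U"
proof -
  have "(k, False) \<notin> U"
  proof
    assume "(k, False) \<in> U"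
    then obtain i where "i < n" "hi i = lo k" using lower_charged by blast
    then show False using assms xmin_le_lo[of i] lo_less_hi[of i] by simp
  qed
  then show ?thesis using assms(1) by simp
qed

lemma upper_end_at_xmax_free:
  assumes "k < n" and "hi k = xmax"
  shows "(k, True) \<in> ends - U"
proof -
  have "(k, True) \<notin> U"
  proof
    assume "(k, True) \<in> U"
    then obtain j where "j < n" "lo j = hi k" using upper_charged by blast
    then show False using assms hi_le_xmax[of j] lo_less_hi[of j] by simp
  qed
  then show ?thesis using assms(1) by simp
qed

lemma four_le_card_free_ends_if_inner_interval:
  assumes "k < n" and "xmin < lo k" and "hi k < xmax"
  shows "4 \<le> card (ends - U)"
proof -
  obtain L R where L: "L < n" "lo L = xmin" and R: "R < n" "hi R = xmax"
    by (rule ex_lo_eq_xmin_hi_eq_xmax) (use assms(1) in simp)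
  obtain f0 where f0: "f0 \<in> ends - U" "end_value lo hi f0 = lo k"
    using ex_free_end_at_value[of "(k, False)"] assms(1) by (auto simp: end_value_def)
  obtain f1 where f1: "f1 \<in> ends - U" "end_value lo hi f1 = hi k"
    using ex_free_end_at_value[of "(k, True)"] assms(1) by (auto simp: end_value_def)
  let ?es = "[(L, False), f0, f1, (R, True)]"
  have "distinct (map (end_value lo hi) ?es)"
    using f0 f1 assms L R lo_less_hi[of k] by (simp add: end_value_def)
  then have "distinct ?es" by (simp only: distinct_map)
  moreover have "set ?es \<subseteq> ends - U"
    using f0 f1 lower_end_at_xmin_free[OF L] upper_end_at_xmax_free[OF R] by simp
  ultimately show ?thesis using length_le_card_if_distinct[of "ends - U" ?es] by simp
qed

lemma four_le_card_free_ends_if_extreme_intervals: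
  assumes "3 \<le> n" and extreme: "\<And>k. k < n \<Longrightarrow> lo k = xmin \<or> hi k = xmax"
  shows "4 \<le> card (ends - U)"
proof -
  define ext where "ext k = (k, lo k \<noteq> xmin)" for k
  have ext_free: "ext k \<in> ends - U \<and> end_value lo hi (ext k) \<in> {xmin, xmax}" if "k < n" for k
    using extreme[OF that] lower_end_at_xmin_free[OF that] upper_end_at_xmax_free[OF that]
    by (auto simp: ext_def end_value_def)
  show ?thesis
  proof (cases "\<exists>e\<in>ends. xmin < end_value lo hi e \<and> end_value lo hi e < xmax")
    case True
    then obtain e where e: "e \<in> ends" "xmin < end_value lo hi e" "end_value lo hi e < xmax"
      by blast
    then obtain f where f: "f \<in> ends - U" "end_value lo hi f = end_value lo hi e"
      using ex_free_end_at_value by blast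
    then have "f \<notin> ext ` {..<n}" using ext_free e by force
    then have "distinct [f, ext 0, ext 1, ext 2]" using assms(1) by (auto simp: ext_def)
    moreover have "set [f, ext 0, ext 1, ext 2] \<subseteq> ends - U" using ext_free assms(1) f by auto
    ultimately show ?thesis
      using length_le_card_if_distinct[of "ends - U" "[f, ext 0, ext 1, ext 2]"] by simp
  next
    case False
    have "lo k = xmin \<and> hi k = xmax" if "k < n" for k
    proof -
      have "\<not> (xmin < end_value lo hi (k, b) \<and> end_value lo hi (k, b) < xmax)" for b
        using False that by blast
      from this[of False] this[of True]
      have "\<not> (xmin < lo k \<and> lo k < xmax)" "\<not> (xmin < hi k \<and> hi k < xmax)"
        by (simp_all add: end_value_def)
      then show ?thesis
        using xmin_le_lo[OF that] hi_le_xmax[OF that] lo_less_hi[OF that] by linarith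
    qed
    then have "set [(0, False), (0, True), (1, False), (1, True)] \<subseteq> ends - U"
      using assms(1) lower_end_at_xmin_free upper_end_at_xmax_free by auto
    then show ?thesis
      using length_le_card_if_distinct[of "ends - U" "[(0, False), (0, True), (1, False), (1, True)]"]
      by simp
  qed
qed

lemma four_le_card_free_ends:
  assumes "3 \<le> n"
  shows "4 \<le> card (ends - U)"
proof (cases "\<exists>k<n. xmin < lo k \<and> hi k < xmax")
  case True
  then show ?thesis using four_le_card_free_ends_if_inner_interval by blast
next
  case False
  have "lo k = xmin \<or> hi k = xmax" if "k < n" for k
    using False that xmin_le_lo[OF that] hi_le_xmax[OF that] by fastforce
  then show ?thesis using four_le_card_free_ends_if_extreme_intervals assms by blast
qed

lemma card_charged_ends_le:
  assumes "3 \<le> n"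
  shows "card U \<le> 2 * n - 4"
proof -
  have "card ends = 2 * n" by (simp add: card_cartesian_product)
  moreover have "card (ends - U) = card ends - card U"
    using charged_subset by (simp add: card_Diff_subset finite_subset)
  ultimately show ?thesis using four_le_card_free_ends[OF assms] by linarith
qed

end

definition box_packing ::
    "nat \<Rightarrow> (nat \<Rightarrow> real) \<Rightarrow> (nat \<Rightarrow> real) \<Rightarrow> (nat \<Rightarrow> real) \<Rightarrow> (nat \<Rightarrow> real) \<Rightarrow> bool" where
  "box_packing n x0 x1 y0 y1 \<longleftrightarrow>
     (\<forall>i<n. x0 i < x1 i \<and> y0 i < y1 i) \<and>
     (\<forall>i<n. \<forall>j<n. i \<noteq> j \<longrightarrow> x1 i \<le> x0 j \<or> x1 j \<le> x0 i \<or> y1 i \<le> y0 j \<or> y1 j \<le> y0 i)"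

definition box_contacts ::
    "nat \<Rightarrow> (nat \<Rightarrow> real) \<Rightarrow> (nat \<Rightarrow> real) \<Rightarrow> (nat \<Rightarrow> real) \<Rightarrow> (nat \<Rightarrow> real) \<Rightarrow> nat set set" where
  "box_contacts n x0 x1 y0 y1 = {{i, j} | i j. i < n \<and> j < n \<and> i \<noteq> j \<and>
     x0 i \<le> x1 j \<and> x0 j \<le> x1 i \<and> y0 i \<le> y1 j \<and> y0 j \<le> y1 i}"

text \<open>
The strict inequality excludes the corner contact in which i lies up and to the left of j: counting
it here would make the charging below non-injective. It is a left contact of the quarter-turned
packing instead.
\<close>

definition left_contact ::
    "(nat \<Rightarrow> real) \<Rightarrow> (nat \<Rightarrow> real) \<Rightarrow> (nat \<Rightarrow> real) \<Rightarrow> (nat \<Rightarrow> real) \<Rightarrow> nat \<Rightarrow> nat \<Rightarrow> bool" where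
  "left_contact x0 x1 y0 y1 i j \<longleftrightarrow> x1 i = x0 j \<and> y0 j \<le> y1 i \<and> y0 i < y1 j"

definition left_contacts ::
    "nat \<Rightarrow> (nat \<Rightarrow> real) \<Rightarrow> (nat \<Rightarrow> real) \<Rightarrow> (nat \<Rightarrow> real) \<Rightarrow> (nat \<Rightarrow> real) \<Rightarrow> nat set set" where
  "left_contacts n x0 x1 y0 y1 = {{i, j} | i j. i < n \<and> j < n \<and> left_contact x0 x1 y0 y1 i j}"

lemma box_packing_quarter_turn:
  "box_packing n x0 x1 y0 y1 \<Longrightarrow> box_packing n y0 y1 (\<lambda>i. - x1 i) (\<lambda>i. - x0 i)"
  unfolding box_packing_def by auto

lemma box_contacts_subset_left_contacts:
  assumes "box_packing n x0 x1 y0 y1"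
  shows "box_contacts n x0 x1 y0 y1 \<subseteq>
    left_contacts n x0 x1 y0 y1 \<union> left_contacts n y0 y1 (\<lambda>i. - x1 i) (\<lambda>i. - x0 i)"
proof
  fix c assume "c \<in> box_contacts n x0 x1 y0 y1"
  then obtain i j where c: "c = {i, j}" "i < n" "j < n" "i \<noteq> j"
    and touch: "x0 i \<le> x1 j" "x0 j \<le> x1 i" "y0 i \<le> y1 j" "y0 j \<le> y1 i"
    unfolding box_contacts_def by blast
  have "x0 i < x1 i" "y0 i < y1 i" "x0 j < x1 j" "y0 j < y1 j"
    and "x1 i \<le> x0 j \<or> x1 j \<le> x0 i \<or> y1 i \<le> y0 j \<or> y1 j \<le> y0 i"
    using assms c unfolding box_packing_def by auto
  then have "left_contact x0 x1 y0 y1 i j \<or> left_contact x0 x1 y0 y1 j i \<or>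
    left_contact y0 y1 (\<lambda>i. - x1 i) (\<lambda>i. - x0 i) i j \<or>
    left_contact y0 y1 (\<lambda>i. - x1 i) (\<lambda>i. - x0 i) j i"
    using touch unfolding left_contact_def by linarith
  then show "c \<in> left_contacts n x0 x1 y0 y1 \<union> left_contacts n y0 y1 (\<lambda>i. - x1 i) (\<lambda>i. - x0 i)"
    using c unfolding left_contacts_def by (auto simp: insert_commute)
qed

definition charged_end :: "(nat \<Rightarrow> real) \<Rightarrow> nat \<times> nat \<Rightarrow> nat \<times> bool" where
  "charged_end y1 ij = (if y1 (fst ij) < y1 (snd ij) then (fst ij, True) else (snd ij, False))"

lemma inj_on_charged_end:
  assumes "box_packing n x0 x1 y0 y1"
  shows "inj_on (charged_end y1) {(i, j). i < n \<and> j < n \<and> left_contact x0 x1 y0 y1 i j}"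
proof (rule inj_onI, clarsimp)
  fix i j i' j'
  assume "i < n" "j < n" "left_contact x0 x1 y0 y1 i j"
    and "i' < n" "j' < n" "left_contact x0 x1 y0 y1 i' j'"
    and eq: "charged_end y1 (i, j) = charged_end y1 (i', j')"
  then have contacts: "x1 i = x0 j" "y0 j \<le> y1 i" "y0 i < y1 j"
    "x1 i' = x0 j'" "y0 j' \<le> y1 i'" "y0 i' < y1 j'"
    unfolding left_contact_def by auto
  have box: "x0 k < x1 k" "y0 k < y1 k" if "k < n" for k
    using assms that unfolding box_packing_def by auto
  have separated: "x1 k \<le> x0 l \<or> x1 l \<le> x0 k \<or> y1 k \<le> y0 l \<or> y1 l \<le> y0 k"
    if "k < n" "l < n" "k \<noteq> l" for k l
    using assms that unfolding box_packing_def by auto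
  from eq consider (upper) "i = i'" "y1 i < y1 j" "y1 i' < y1 j'"
    | (lower) "j = j'" "\<not> y1 i < y1 j" "\<not> y1 i' < y1 j'"
    by (auto simp: charged_end_def split: if_splits)
  then show "i = i' \<and> j = j'"
  proof cases
    case upper
    have "j = j'"
    proof (rule ccontr)
      assume "j \<noteq> j'"
      then show False
        using separated[of j j'] box[of j] box[of j'] contacts upper \<open>j < n\<close> \<open>j' < n\<close> by auto
    qed
    with upper show ?thesis by simp
  next
    case lower
    have "i = i'"
    proof (rule ccontr)
      assume "i \<noteq> i'"
      then show False
        using separated[of i i'] box[of i] box[of i'] contacts lower \<open>i < n\<close> \<open>i' < n\<close> by auto
    qed
    with lower show ?thesis by simp
  qed
qed

lemma card_left_contacts_le:
  assumes "3 \<le> n" and packing: "box_packing n x0 x1 y0 y1"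
  shows "card (left_contacts n x0 x1 y0 y1) \<le> 2 * n - 4"
proof -
  define P where "P = {(i, j). i < n \<and> j < n \<and> left_contact x0 x1 y0 y1 i j}"
  have "finite P" unfolding P_def
    by (rule finite_subset[of _ "{..<n} \<times> {..<n}"]) auto
  have "left_contacts n x0 x1 y0 y1 = (\<lambda>(i, j). {i, j}) ` P"
    unfolding left_contacts_def P_def by auto
  then have "card (left_contacts n x0 x1 y0 y1) \<le> card P"
    using \<open>finite P\<close> card_image_le by simp
  also have "card P = card (charged_end y1 ` P)"
    using inj_on_charged_end[OF packing] by (simp add: P_def card_image)
  also have "\<dots> \<le> 2 * n - 4"
  proof (rule charged_interval_ends.card_charged_ends_le[OF _ assms(1)])
    show "charged_interval_ends n x0 x1 y1 (charged_end y1 ` P)"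
    proof
      show "x0 k < x1 k" if "k < n" for k
        using packing that unfolding box_packing_def by auto
      show "charged_end y1 ` P \<subseteq> {..<n} \<times> UNIV"
        unfolding P_def charged_end_def by auto
      show "\<exists>i<n. x1 i = x0 k \<and> y1 k \<le> y1 i" if "(k, False) \<in> charged_end y1 ` P" for k
        using that unfolding P_def charged_end_def left_contact_def
        by (auto split: if_splits)
      show "\<exists>j<n. x0 j = x1 k \<and> y1 k < y1 j" if "(k, True) \<in> charged_end y1 ` P" for k
        using that unfolding P_def charged_end_def left_contact_def
        by (auto split: if_splits)
    qed
  qed
  finally show ?thesis .
qed

lemma card_box_contacts_le:
  assumes "3 \<le> n" and packing: "box_packing n x0 x1 y0 y1"
  shows "card (box_contacts n x0 x1 y0 y1) \<le> 4 * n - 8"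
proof -
  have finite_left_contacts: "finite (left_contacts n a b c d)" for a b c d
    by (rule finite_subset[of _ "Pow {..<n}"]) (auto simp: left_contacts_def)
  have "card (box_contacts n x0 x1 y0 y1) \<le>
      card (left_contacts n x0 x1 y0 y1 \<union> left_contacts n y0 y1 (\<lambda>i. - x1 i) (\<lambda>i. - x0 i))"
    using box_contacts_subset_left_contacts[OF packing] finite_left_contacts by (intro card_mono) auto
  also have "\<dots> \<le> card (left_contacts n x0 x1 y0 y1) +
      card (left_contacts n y0 y1 (\<lambda>i. - x1 i) (\<lambda>i. - x0 i))"
    by (rule card_Un_le)
  also have "\<dots> \<le> (2 * n - 4) + (2 * n - 4)"
    using card_left_contacts_le[OF assms(1) packing]
      card_left_contacts_le[OF assms(1) box_packing_quarter_turn[OF packing]] by (rule add_mono)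
  finally show ?thesis by linarith
qed

lemma hsquare_eq_box:
  assumes "0 < r"
  shows "hsquare r p = {fst p - r..fst p + r} \<times> {snd p - r..snd p + r}"
proof -
  have "unit_square = {-1..1} \<times> {-1..1}"
    unfolding unit_square_def by auto
  then have "hsquare r p = map_prod (\<lambda>x. r * x + fst p) (\<lambda>y. r * y + snd p) ` ({-1..1} \<times> {-1..1})"
    unfolding hsquare_def by (rule image_cong) (simp add: prod_eq_iff)
  also have "\<dots> = {fst p - r..fst p + r} \<times> {snd p - r..snd p + r}"
    using assms by (simp only: map_prod_surj_on[OF refl refl] image_affinity_atLeastAtMost) (simp add: add.commute)
  finally show ?thesis .
qed

lemma hsquare_interiors_disjoint_iff:
  assumes "0 < r" and "0 < s"
  shows "interior (hsquare r p) \<inter> interior (hsquare s q) = {} \<longleftrightarrow>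
    fst p + r \<le> fst q - s \<or> fst q + s \<le> fst p - r \<or> snd p + r \<le> snd q - s \<or> snd q + s \<le> snd p - r"
  using assms by (auto simp: hsquare_eq_box interior_Times Times_Int_Times min_le_iff_disj le_max_iff_disj)

lemma hsquares_intersect_iff:
  assumes "0 < r" and "0 < s"
  shows "hsquare r p \<inter> hsquare s q \<noteq> {} \<longleftrightarrow>
    fst p - r \<le> fst q + s \<and> fst q - s \<le> fst p + r \<and> snd p - r \<le> snd q + s \<and> snd q - s \<le> snd p + r"
  using assms by (auto simp: hsquare_eq_box Times_Int_Times)

lemma homothetic_packing_box_packing:
  assumes "homothetic_packing n r p"
  shows "box_packing n (\<lambda>i. fst (p i) - r i) (\<lambda>i. fst (p i) + r i)
    (\<lambda>i. snd (p i) - r i) (\<lambda>i. snd (p i) + r i)"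
proof -
  have pos: "\<forall>i<n. 0 < r i" using assms unfolding homothetic_packing_def by blast
  have "fst (p i) + r i \<le> fst (p j) - r j \<or> fst (p j) + r j \<le> fst (p i) - r i \<or>
      snd (p i) + r i \<le> snd (p j) - r j \<or> snd (p j) + r j \<le> snd (p i) - r i"
    if "i < n" "j < n" "i \<noteq> j" for i j
    using assms pos that by (simp add: homothetic_packing_def hsquare_interiors_disjoint_iff)
  with pos show ?thesis unfolding box_packing_def by auto
qed

lemma contacts_eq_box_contacts:
  assumes "homothetic_packing n r p"
  shows "contacts n r p = box_contacts n (\<lambda>i. fst (p i) - r i) (\<lambda>i. fst (p i) + r i)
    (\<lambda>i. snd (p i) - r i) (\<lambda>i. snd (p i) + r i)"
proof -
  have touch: "hsquare (r i) (p i) \<inter> hsquare (r j) (p j) \<noteq> {} \<longleftrightarrow>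
      fst (p i) - r i \<le> fst (p j) + r j \<and> fst (p j) - r j \<le> fst (p i) + r i \<and>
      snd (p i) - r i \<le> snd (p j) + r j \<and> snd (p j) - r j \<le> snd (p i) + r i"
    if "i < n" "j < n" for i j
    using assms that by (simp add: homothetic_packing_def hsquares_intersect_iff)
  show ?thesis
    unfolding contacts_def box_contacts_def by (rule Collect_cong) (use touch in blast)
qed

theorem proposition13:
  fixes n :: nat and r :: "nat \<Rightarrow> real" and p :: "nat \<Rightarrow> real \<times> real"
  assumes "n \<ge> 3" and "homothetic_packing n r p"
  shows "card (contacts n r p) \<le> 4 * n - 8"
  using card_box_contacts_le[OF assms(1) homothetic_packing_box_packing[OF assms(2)]]
  by (simp add: contacts_eq_box_contacts[OF assms(2)])

end
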